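(* $\mathrm{CLC}_0$ has the unique normal form property: if $t_1$ and $t_2$ are in $\mathrm{CLC}_0$-normal form and $t_1=_{\mathrm{CLC}_0}t_2$, then $t_1\equiv t_2$.
   Context: Terms are built from variables and the constants $C,T,F,K,S$ by binary application (left-associative); $\equiv$ is syntactic identity. $\mathrm{CLC}_0$ is the term rewriting system with rules $C\,T\,x\,y\to x$; $C\,F\,x\,y\to y$; $C\,z\,x\,x\to x$; $K\,x\,y\to x$; $S\,x\,y\,z\to x\,z\,(y\,z)$, rewriting closed under contexts; $=_{\mathrm{CLC}_0}$ is its conversion relation and a normal form is a term containing no redex. *)

theory Defs
  imports Main
begin

datatype 'v trm = Var 'v | CC | TT | FF | KK | SS | App "'v trm" "'v trm" (infixl "\<cdot>" 100)

inductive root_step :: "'v trm \<Rightarrow> 'v trm \<Rightarrow> bool" where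
  condT: "root_step (CC \<cdot> TT \<cdot> x \<cdot> y) x"
| condF: "root_step (CC \<cdot> FF \<cdot> x \<cdot> y) y"
| condEq: "root_step (CC \<cdot> z \<cdot> x \<cdot> x) x"
| ruleK: "root_step (KK \<cdot> x \<cdot> y) x"
| ruleS: "root_step (SS \<cdot> x \<cdot> y \<cdot> z) (x \<cdot> z \<cdot> (y \<cdot> z))"

inductive step :: "'v trm \<Rightarrow> 'v trm \<Rightarrow> bool" where
  root: "root_step s t \<Longrightarrow> step s t"
| appL: "step s t \<Longrightarrow> step (s \<cdot> u) (t \<cdot> u)"
| appR: "step s t \<Longrightarrow> step (u \<cdot> s) (u \<cdot> t)"

definition conv :: "'v trm \<Rightarrow> 'v trm \<Rightarrow> bool" where
  "conv = (sup step step\<inverse>\<inverse>)\<^sup>*\<^sup>*"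

definition normal_form :: "'v trm \<Rightarrow> bool" where
  "normal_form t \<longleftrightarrow> \<not> (\<exists>u. step t u)"

end

theory Submission
  imports Defs "HOL-Library.Confluence"
begin

text \<open>
  CLC_0 is not confluent, so unique normal forms cannot be read off from a common reduct.
  Instead, replace the non-left-linear rule \<open>C z x x \<rightarrow> x\<close> by the rules
  \<open>C z x y \<rightarrow> x\<close> and \<open>C z x y \<rightarrow> y\<close>, both guarded by convertibility of \<open>x\<close> and \<open>y\<close>,
  the choice between them decided by whether \<open>z\<close> is convertible to \<open>F\<close>. The guards refer to
  the fixed relation of CLC_0-conversion, so the new system behaves like a left-linear one.
  Since \<open>T\<close> and \<open>F\<close> are not convertible (they differ in an Engeler-style graph model),
  its rules agree with \<open>C T x y \<rightarrow> x\<close> and \<open>C F x y \<rightarrow> y\<close> on overlaps, parallel reduction has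
  the triangle property, and the new system is confluent. It contains CLC_0, so convertible
  terms have a common reduct in it. Finally, by induction on size, a CLC_0-normal form is
  normal for the new system: a guarded redex \<open>C z x y\<close> in normal form has convertible
  normal arguments \<open>x\<close>, \<open>y\<close>, which are equal by induction, so \<open>C z x x\<close> would be a redex.
\<close>

lemma rtranclp_map:
  assumes "r\<^sup>*\<^sup>* x y" and "\<And>x y. r x y \<Longrightarrow> s (f x) (f y)"
  shows "s\<^sup>*\<^sup>* (f x) (f y)"
  using assms(1) by induction (auto intro: rtranclp.rtrancl_into_rtrancl assms(2))

lemma equivclp_map:
  assumes "equivclp r x y" and "\<And>x y. r x y \<Longrightarrow> s (f x) (f y)"
  shows "equivclp s (f x) (f y)"
  using assms(1) unfolding equivclp_def
  by (rule rtranclp_map) (auto simp: symclp_def intro: assms(2))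

lemma conv_eq_equivclp: "conv = equivclp step"
  by (simp add: conv_def equivclp_def symclp_pointfree)

lemma conv_refl [simp]: "conv t t"
  by (simp add: conv_eq_equivclp)

lemma conv_sym [sym]: "conv s t \<Longrightarrow> conv t s"
  unfolding conv_eq_equivclp by (rule equivclp_sym)

lemma conv_trans [trans]: "conv s t \<Longrightarrow> conv t u \<Longrightarrow> conv s u"
  unfolding conv_eq_equivclp by (rule equivclp_trans)

lemma conv_app:
  assumes "conv s s'" and "conv t t'"
  shows "conv (s \<cdot> t) (s' \<cdot> t')"
proof -
  have "equivclp step (s \<cdot> t) (s' \<cdot> t)"
    using assms(1) unfolding conv_eq_equivclp by (rule equivclp_map) (rule step.appL)
  also have "equivclp step (s' \<cdot> t) (s' \<cdot> t')"
    using assms(2) unfolding conv_eq_equivclp by (rule equivclp_map) (rule step.appR)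
  finally show ?thesis
    unfolding conv_eq_equivclp .
qed

lemma root_step_conv: "root_step s t \<Longrightarrow> conv s t"
  unfolding conv_eq_equivclp by (blast intro: step.root)

section \<open>Consistency: \<open>T\<close> and \<open>F\<close> are not convertible\<close>

datatype engeler = Atom nat | Arr "engeler list" engeler

definition eng_app :: "engeler set \<Rightarrow> engeler set \<Rightarrow> engeler set" where
  "eng_app X Y = {b. \<exists>\<beta>. set \<beta> \<subseteq> Y \<and> Arr \<beta> b \<in> X}"

definition K_graph :: "engeler set" where
  "K_graph = {Arr [b] (Arr \<gamma> b) | b \<gamma>. True}"

definition S_graph :: "engeler set" where
  "S_graph = {Arr [Arr \<delta> (Arr \<beta> b)] (Arr \<eta> (Arr \<zeta> b)) | \<delta> \<beta> b \<eta> \<zeta>.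
     set \<delta> \<subseteq> set \<zeta> \<and> (\<forall>c\<in>set \<beta>. \<exists>\<gamma>. set \<gamma> \<subseteq> set \<zeta> \<and> Arr \<gamma> c \<in> set \<eta>)}"

text \<open>One clause per rule for \<open>C\<close>, reading \<open>Atom 0\<close> as \<open>T\<close> and \<open>Atom 1\<close> as \<open>F\<close>; the last clause
  validates \<open>C z x x = x\<close>.\<close>

definition C_graph :: "engeler set" where
  "C_graph = {Arr [Atom 0] (Arr [b] (Arr [] b)) | b. True}
     \<union> {Arr [Atom 1] (Arr [] (Arr [b] b)) | b. True}
     \<union> {Arr [] (Arr [b] (Arr [b] b)) | b. True}"

fun denot :: "'v trm \<Rightarrow> engeler set" where
  "denot (Var v) = {}"
| "denot CC = C_graph"
| "denot TT = {Atom 0}"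
| "denot FF = {Atom 1}"
| "denot KK = K_graph"
| "denot SS = S_graph"
| "denot (s \<cdot> t) = eng_app (denot s) (denot t)"

lemma mem_eng_app_iff: "b \<in> eng_app X Y \<longleftrightarrow> (\<exists>\<beta>. set \<beta> \<subseteq> Y \<and> Arr \<beta> b \<in> X)"
  by (simp add: eng_app_def)

lemma eng_appE: "b \<in> eng_app X Y \<Longrightarrow> (\<And>\<beta>. set \<beta> \<subseteq> Y \<Longrightarrow> Arr \<beta> b \<in> X \<Longrightarrow> P) \<Longrightarrow> P"
  unfolding eng_app_def by blast

lemma mem_eng_app3_iff:
  "b \<in> eng_app (eng_app (eng_app X x) y) z \<longleftrightarrow>
    (\<exists>\<zeta> \<eta> \<xi>. set \<zeta> \<subseteq> z \<and> set \<eta> \<subseteq> y \<and> set \<xi> \<subseteq> x \<and> Arr \<xi> (Arr \<eta> (Arr \<zeta> b)) \<in> X)"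
  unfolding mem_eng_app_iff by blast

lemma eng_app_K_graph: "eng_app (eng_app K_graph x) y = x"
proof -
  have "eng_app K_graph x = {Arr \<gamma> b | b \<gamma>. b \<in> x}"
    unfolding eng_app_def K_graph_def by auto
  then show ?thesis unfolding eng_app_def by (auto intro: exI[of _ "[]"])
qed

lemma Arr3_mem_C_graph_iff:
  "Arr \<xi> (Arr \<eta> (Arr \<zeta> b)) \<in> C_graph \<longleftrightarrow>
    (\<xi> = [Atom 0] \<and> \<eta> = [b] \<and> \<zeta> = []) \<or> (\<xi> = [Atom 1] \<and> \<eta> = [] \<and> \<zeta> = [b]) \<or>
    (\<xi> = [] \<and> \<eta> = [b] \<and> \<zeta> = [b])"
  unfolding C_graph_def by blast

lemma mem_eng_app_C_graph_iff:
  "b \<in> eng_app (eng_app (eng_app C_graph z) x) y \<longleftrightarrow>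
    (Atom 0 \<in> z \<and> b \<in> x) \<or> (Atom 1 \<in> z \<and> b \<in> y) \<or> (b \<in> x \<and> b \<in> y)"
  (is "?lhs \<longleftrightarrow> ?rhs")
proof
  assume ?lhs
  then show ?rhs
    unfolding mem_eng_app3_iff Arr3_mem_C_graph_iff by auto
next
  assume ?rhs
  then show ?lhs
  proof (elim disjE conjE)
    assume "Atom 0 \<in> z" "b \<in> x"
    then show ?thesis
      unfolding mem_eng_app3_iff by (intro exI[of _ "[]"] exI[of _ "[b]"] exI[of _ "[Atom 0]"]) (simp add: C_graph_def)
  next
    assume "Atom 1 \<in> z" "b \<in> y"
    then show ?thesis
      unfolding mem_eng_app3_iff by (intro exI[of _ "[b]"] exI[of _ "[]"] exI[of _ "[Atom 1]"]) (simp add: C_graph_def)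
  next
    assume "b \<in> x" "b \<in> y"
    then show ?thesis
      unfolding mem_eng_app3_iff by (intro exI[of _ "[b]"] exI[of _ "[b]"] exI[of _ "[]"]) (simp add: C_graph_def)
  qed
qed

lemma Arr3_mem_S_graph_iff:
  "Arr \<xi> (Arr \<eta> (Arr \<zeta> b)) \<in> S_graph \<longleftrightarrow>
    (\<exists>\<delta> \<beta>. \<xi> = [Arr \<delta> (Arr \<beta> b)] \<and> set \<delta> \<subseteq> set \<zeta> \<and>
      (\<forall>c\<in>set \<beta>. \<exists>\<gamma>. set \<gamma> \<subseteq> set \<zeta> \<and> Arr \<gamma> c \<in> set \<eta>))"
  unfolding S_graph_def by blast

lemma eng_app_S_graph:
  "eng_app (eng_app (eng_app S_graph x) y) z = eng_app (eng_app x z) (eng_app y z)"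
proof (intro set_eqI iffI)
  fix b
  assume "b \<in> eng_app (eng_app (eng_app S_graph x) y) z"
  then obtain \<zeta> \<eta> \<delta> \<beta> where
    \<zeta>: "set \<zeta> \<subseteq> z" and \<eta>: "set \<eta> \<subseteq> y" and \<delta>: "set \<delta> \<subseteq> set \<zeta>" and "Arr \<delta> (Arr \<beta> b) \<in> x"
    and \<beta>: "\<forall>c\<in>set \<beta>. \<exists>\<gamma>. set \<gamma> \<subseteq> set \<zeta> \<and> Arr \<gamma> c \<in> set \<eta>"
    unfolding mem_eng_app3_iff Arr3_mem_S_graph_iff by auto
  then have "Arr \<beta> b \<in> eng_app x z"
    using \<zeta> unfolding mem_eng_app_iff by blast
  moreover have "set \<beta> \<subseteq> eng_app y z"
  proof
    fix c
    assume "c \<in> set \<beta>"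
    then obtain \<gamma> where "set \<gamma> \<subseteq> set \<zeta>" "Arr \<gamma> c \<in> set \<eta>"
      using \<beta> by blast
    then show "c \<in> eng_app y z"
      using \<zeta> \<eta> unfolding mem_eng_app_iff by blast
  qed
  ultimately show "b \<in> eng_app (eng_app x z) (eng_app y z)"
    unfolding mem_eng_app_iff by blast
next
  fix b
  assume "b \<in> eng_app (eng_app x z) (eng_app y z)"
  then obtain \<beta> \<delta> where \<beta>: "set \<beta> \<subseteq> eng_app y z" and \<delta>: "set \<delta> \<subseteq> z"
    and x: "Arr \<delta> (Arr \<beta> b) \<in> x"
    by (auto elim!: eng_appE)
  have "\<forall>c\<in>set \<beta>. \<exists>\<gamma>. set \<gamma> \<subseteq> z \<and> Arr \<gamma> c \<in> y"
  proof
    fix c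
    assume "c \<in> set \<beta>"
    with \<beta> have "c \<in> eng_app y z" by blast
    then show "\<exists>\<gamma>. set \<gamma> \<subseteq> z \<and> Arr \<gamma> c \<in> y" by (rule eng_appE) blast
  qed
  then have "\<exists>g. \<forall>c\<in>set \<beta>. set (g c) \<subseteq> z \<and> Arr (g c) c \<in> y"
    by (rule bchoice)
  then obtain g where g: "\<forall>c\<in>set \<beta>. set (g c) \<subseteq> z \<and> Arr (g c) c \<in> y"
    by blast
  define \<zeta> where "\<zeta> = \<delta> @ concat (map g \<beta>)"
  define \<eta> where "\<eta> = map (\<lambda>c. Arr (g c) c) \<beta>"
  have "\<forall>c\<in>set \<beta>. set (g c) \<subseteq> set \<zeta> \<and> Arr (g c) c \<in> set \<eta>"
    unfolding \<zeta>_def \<eta>_def by auto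
  moreover have "set \<delta> \<subseteq> set \<zeta>"
    unfolding \<zeta>_def by simp
  ultimately have "Arr [Arr \<delta> (Arr \<beta> b)] (Arr \<eta> (Arr \<zeta> b)) \<in> S_graph"
    unfolding Arr3_mem_S_graph_iff by blast
  moreover have "set \<zeta> \<subseteq> z" "set \<eta> \<subseteq> y" "set [Arr \<delta> (Arr \<beta> b)] \<subseteq> x"
    using \<delta> g x unfolding \<zeta>_def \<eta>_def by auto
  ultimately show "b \<in> eng_app (eng_app (eng_app S_graph x) y) z"
    unfolding mem_eng_app3_iff by blast
qed

lemma denot_root_step: "root_step s t \<Longrightarrow> denot s = denot t"
  by (induction rule: root_step.induct)
    (auto simp: mem_eng_app_C_graph_iff eng_app_K_graph eng_app_S_graph)

lemma denot_step: "step s t \<Longrightarrow> denot s = denot t"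
  by (induction rule: step.induct) (auto simp: denot_root_step)

lemma denot_conv: "conv s t \<Longrightarrow> denot s = denot t"
  unfolding conv_eq_equivclp by (induction rule: equivclp_induct) (auto dest: denot_step)

lemma not_conv_TT_FF: "\<not> conv TT FF"
  using denot_conv[of TT FF] by auto

section \<open>Conversion-guarded reduction\<close>

inductive guarded_root :: "'v trm \<Rightarrow> 'v trm \<Rightarrow> bool" where
  condT: "guarded_root (CC \<cdot> TT \<cdot> x \<cdot> y) x"
| condF: "guarded_root (CC \<cdot> FF \<cdot> x \<cdot> y) y"
| condL: "conv x y \<Longrightarrow> \<not> conv z FF \<Longrightarrow> guarded_root (CC \<cdot> z \<cdot> x \<cdot> y) x"
| condR: "conv x y \<Longrightarrow> conv z FF \<Longrightarrow> guarded_root (CC \<cdot> z \<cdot> x \<cdot> y) y"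
| ruleK: "guarded_root (KK \<cdot> x \<cdot> y) x"
| ruleS: "guarded_root (SS \<cdot> x \<cdot> y \<cdot> z) (x \<cdot> z \<cdot> (y \<cdot> z))"

inductive guarded_step :: "'v trm \<Rightarrow> 'v trm \<Rightarrow> bool" where
  root: "guarded_root s t \<Longrightarrow> guarded_step s t"
| appL: "guarded_step s t \<Longrightarrow> guarded_step (s \<cdot> u) (t \<cdot> u)"
| appR: "guarded_step s t \<Longrightarrow> guarded_step (u \<cdot> s) (u \<cdot> t)"

lemma root_step_imp_guarded_root: "root_step s t \<Longrightarrow> guarded_root s t"
proof (induction rule: root_step.induct)
  case (condEq z x)
  show ?case
    by (cases "conv z FF") (auto intro: guarded_root.condL guarded_root.condR)
qed (auto intro: guarded_root.intros)

lemma step_imp_guarded_step: "step s t \<Longrightarrow> guarded_step s t"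
  by (induction rule: step.induct) (auto intro: guarded_step.intros root_step_imp_guarded_root)

lemma guarded_root_imp_conv: "guarded_root s t \<Longrightarrow> conv s t"
proof (induction rule: guarded_root.induct)
  case (condL x y z)
  have "conv (CC \<cdot> z \<cdot> x \<cdot> y) (CC \<cdot> z \<cdot> x \<cdot> x)"
    using conv_sym[OF condL(1)] by (intro conv_app conv_refl)
  also have "conv (CC \<cdot> z \<cdot> x \<cdot> x) x"
    by (rule root_step_conv) (rule root_step.condEq)
  finally show ?case .
next
  case (condR x y z)
  have "conv (CC \<cdot> z \<cdot> x \<cdot> y) (CC \<cdot> z \<cdot> y \<cdot> y)"
    using condR(1) by (intro conv_app conv_refl)
  also have "conv (CC \<cdot> z \<cdot> y \<cdot> y) y"
    by (rule root_step_conv) (rule root_step.condEq)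
  finally show ?case .
qed (auto intro: root_step_conv root_step.intros)

lemma guarded_step_imp_conv: "guarded_step s t \<Longrightarrow> conv s t"
  by (induction rule: guarded_step.induct) (auto intro: guarded_root_imp_conv conv_app)

lemma rtranclp_guarded_step_imp_conv: "guarded_step\<^sup>*\<^sup>* s t \<Longrightarrow> conv s t"
  by (induction rule: rtranclp_induct) (auto intro: conv_trans guarded_step_imp_conv)

lemma rtranclp_guarded_step_app:
  assumes "guarded_step\<^sup>*\<^sup>* s s'" and "guarded_step\<^sup>*\<^sup>* t t'"
  shows "guarded_step\<^sup>*\<^sup>* (s \<cdot> t) (s' \<cdot> t')"
proof -
  have "guarded_step\<^sup>*\<^sup>* (s \<cdot> t) (s' \<cdot> t)"
    using assms(1) by (rule rtranclp_map) (rule guarded_step.appL)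
  also have "guarded_step\<^sup>*\<^sup>* (s' \<cdot> t) (s' \<cdot> t')"
    using assms(2) by (rule rtranclp_map) (rule guarded_step.appR)
  finally show ?thesis .
qed

inductive par :: "'v trm \<Rightarrow> 'v trm \<Rightarrow> bool" where
  var: "par (Var v) (Var v)"
| C: "par CC CC"
| T: "par TT TT"
| F: "par FF FF"
| K: "par KK KK"
| S: "par SS SS"
| app: "par s s' \<Longrightarrow> par t t' \<Longrightarrow> par (s \<cdot> t) (s' \<cdot> t')"
| condT: "par x x' \<Longrightarrow> par (CC \<cdot> TT \<cdot> x \<cdot> y) x'"
| condF: "par y y' \<Longrightarrow> par (CC \<cdot> FF \<cdot> x \<cdot> y) y'"
| condL: "par x x' \<Longrightarrow> conv x y \<Longrightarrow> \<not> conv z FF \<Longrightarrow> par (CC \<cdot> z \<cdot> x \<cdot> y) x'"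
| condR: "par y y' \<Longrightarrow> conv x y \<Longrightarrow> conv z FF \<Longrightarrow> par (CC \<cdot> z \<cdot> x \<cdot> y) y'"
| ruleK: "par x x' \<Longrightarrow> par (KK \<cdot> x \<cdot> y) x'"
| ruleS: "par x x' \<Longrightarrow> par y y' \<Longrightarrow> par z z' \<Longrightarrow> par (SS \<cdot> x \<cdot> y \<cdot> z) (x' \<cdot> z' \<cdot> (y' \<cdot> z'))"

lemma par_refl: "par t t"
  by (induction t) (auto intro: par.intros)

lemma guarded_step_imp_par: "guarded_step s t \<Longrightarrow> par s t"
proof (induction rule: guarded_step.induct)
  case (root s t)
  then show ?case
    by (cases rule: guarded_root.cases) (auto intro: par.intros par_refl)
qed (auto intro: par.intros par_refl)

lemma par_imp_rtranclp_guarded_step: "par s t \<Longrightarrow> guarded_step\<^sup>*\<^sup>* s t"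
proof (induction rule: par.induct)
  case (app s s' t t')
  from app.IH show ?case by (rule rtranclp_guarded_step_app)
next
  case (ruleS x x' y y' z z')
  have "guarded_step (SS \<cdot> x \<cdot> y \<cdot> z) (x \<cdot> z \<cdot> (y \<cdot> z))"
    by (intro guarded_step.root guarded_root.ruleS)
  moreover have "guarded_step\<^sup>*\<^sup>* (x \<cdot> z \<cdot> (y \<cdot> z)) (x' \<cdot> z' \<cdot> (y' \<cdot> z'))"
    using ruleS.IH by (intro rtranclp_guarded_step_app)
  ultimately show ?case
    by (rule converse_rtranclp_into_rtranclp)
qed (auto intro: converse_rtranclp_into_rtranclp guarded_step.root guarded_root.intros)

lemma rtranclp_par_eq: "par\<^sup>*\<^sup>* = guarded_step\<^sup>*\<^sup>*"
  by (rule rtranclp_subset) (auto intro: guarded_step_imp_par par_imp_rtranclp_guarded_step)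

lemma par_imp_conv: "par s t \<Longrightarrow> conv s t"
  by (intro rtranclp_guarded_step_imp_conv par_imp_rtranclp_guarded_step)

fun complete_dev :: "'v trm \<Rightarrow> 'v trm" where
  "complete_dev (CC \<cdot> z \<cdot> x \<cdot> y) =
    (if z = TT then complete_dev x
     else if z = FF then complete_dev y
     else if conv x y \<and> \<not> conv z FF then complete_dev x
     else if conv x y then complete_dev y
     else CC \<cdot> complete_dev z \<cdot> complete_dev x \<cdot> complete_dev y)"
| "complete_dev (KK \<cdot> x \<cdot> y) = complete_dev x"
| "complete_dev (SS \<cdot> x \<cdot> y \<cdot> z) = complete_dev x \<cdot> complete_dev z \<cdot> (complete_dev y \<cdot> complete_dev z)"
| "complete_dev (s \<cdot> t) = complete_dev s \<cdot> complete_dev t"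
| "complete_dev t = t"

lemma complete_dev_app:
  assumes "\<And>z x. s \<noteq> CC \<cdot> z \<cdot> x" and "\<And>x. s \<noteq> KK \<cdot> x" and "\<And>x y. s \<noteq> SS \<cdot> x \<cdot> y"
  shows "complete_dev (s \<cdot> u) = complete_dev s \<cdot> complete_dev u"
  using assms by (cases "s \<cdot> u" rule: complete_dev.cases) auto

lemma par_const_inv:
  "par CC c \<Longrightarrow> c = CC" "par TT c \<Longrightarrow> c = TT" "par FF c \<Longrightarrow> c = FF"
  "par KK c \<Longrightarrow> c = KK" "par SS c \<Longrightarrow> c = SS"
  by (auto elim: par.cases)

lemma par_CC_app_inv: "par (CC \<cdot> z) c \<Longrightarrow> \<exists>z'. c = CC \<cdot> z' \<and> par z z'"
  by (erule par.cases) (auto dest: par_const_inv)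

lemma par_CC_app2_inv: "par (CC \<cdot> z \<cdot> x) c \<Longrightarrow> \<exists>z' x'. c = CC \<cdot> z' \<cdot> x' \<and> par z z' \<and> par x x'"
  by (erule par.cases) (auto dest: par_CC_app_inv)

lemma par_KK_app_inv: "par (KK \<cdot> x) c \<Longrightarrow> \<exists>x'. c = KK \<cdot> x' \<and> par x x'"
  by (erule par.cases) (auto dest: par_const_inv)

lemma par_SS_app_inv: "par (SS \<cdot> x) c \<Longrightarrow> \<exists>x'. c = SS \<cdot> x' \<and> par x x'"
  by (erule par.cases) (auto dest: par_const_inv)

lemma par_SS_app2_inv: "par (SS \<cdot> x \<cdot> y) c \<Longrightarrow> \<exists>x' y'. c = SS \<cdot> x' \<cdot> y' \<and> par x x' \<and> par y y'"
  by (erule par.cases) (auto dest: par_SS_app_inv)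

lemma par_preserves_conv: "conv x y \<Longrightarrow> par x x' \<Longrightarrow> par y y' \<Longrightarrow> conv x' y'"
  by (meson conv_sym conv_trans par_imp_conv)

lemma par_complete_dev_cond:
  assumes par: "par z z'" "par x x'" "par y y'"
    and IH: "par z' (complete_dev z)" "par x' (complete_dev x)" "par y' (complete_dev y)"
  shows "par (CC \<cdot> z' \<cdot> x' \<cdot> y') (complete_dev (CC \<cdot> z \<cdot> x \<cdot> y))"
proof -
  consider "z = TT" | "z = FF" | "z \<noteq> TT" "z \<noteq> FF" "conv x y" "\<not> conv z FF"
    | "z \<noteq> TT" "z \<noteq> FF" "conv x y" "conv z FF" | "z \<noteq> TT" "z \<noteq> FF" "\<not> conv x y"
    by blast
  then show ?thesis
  proof cases
    case 1
    then have "z' = TT" using par(1) par_const_inv by blast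
    then show ?thesis using 1 IH by (auto intro: par.condT)
  next
    case 2
    then have "z' = FF" using par(1) par_const_inv by blast
    then show ?thesis using 2 IH by (auto intro: par.condF)
  next
    case 3
    have "conv x' y'" using 3 par by (blast intro: par_preserves_conv)
    moreover have "\<not> conv z' FF" using 3 par(1) by (meson conv_trans par_imp_conv)
    ultimately show ?thesis using 3 IH by (auto intro: par.condL)
  next
    case 4
    have "conv x' y'" using 4 par by (blast intro: par_preserves_conv)
    moreover have "conv z' FF" using 4 par(1) by (meson conv_sym conv_trans par_imp_conv)
    ultimately show ?thesis using 4 IH by (auto intro: par.condR)
  next
    case 5
    then show ?thesis using IH by (auto intro: par.app par.C)
  qed
qed

lemma par_complete_dev: "par t a \<Longrightarrow> par a (complete_dev t)"
proof (induction rule: par.induct)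
  case (app s s' u u')
  consider (C) z x where "s = CC \<cdot> z \<cdot> x" | (K) x where "s = KK \<cdot> x"
    | (S) x y where "s = SS \<cdot> x \<cdot> y"
    | (other) "\<And>z x. s \<noteq> CC \<cdot> z \<cdot> x" "\<And>x. s \<noteq> KK \<cdot> x" "\<And>x y. s \<noteq> SS \<cdot> x \<cdot> y"
    by blast
  then show ?case
  proof cases
    case (C z x)
    with app.hyps(1) obtain z' x' where s': "s' = CC \<cdot> z' \<cdot> x'" "par z z'" "par x x'"
      using par_CC_app2_inv by blast
    with app.IH(1) C have "par z' (complete_dev z)" "par x' (complete_dev x)"
      by (auto dest: par_CC_app2_inv)
    with s' app.hyps(2) app.IH(2) show ?thesis
      unfolding C s'(1) by (intro par_complete_dev_cond)
  next
    case (K x)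
    with app.hyps(1) obtain x' where s': "s' = KK \<cdot> x'" "par x x'"
      using par_KK_app_inv by blast
    with app.IH(1) K have "par x' (complete_dev x)"
      by (auto dest: par_KK_app_inv)
    with s' K show ?thesis
      by (auto intro: par.ruleK)
  next
    case (S x y)
    with app.hyps(1) obtain x' y' where s': "s' = SS \<cdot> x' \<cdot> y'" "par x x'" "par y y'"
      using par_SS_app2_inv by blast
    with app.IH(1) S have "par x' (complete_dev x)" "par y' (complete_dev y)"
      by (auto dest: par_SS_app2_inv)
    with s' S app.IH(2) show ?thesis
      by (auto intro: par.ruleS)
  next
    case other
    with app.IH show ?thesis
      by (simp add: complete_dev_app par.app)
  qed
next
  case (condL x x' y z)
  then show ?case
    using not_conv_TT_FF by auto
next
  case (condR y y' x z)
  then show ?case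
    using not_conv_TT_FF by auto
qed (auto intro: par.intros)

lemma strong_confluentp_par: "strong_confluentp par"
proof
  fix t a b
  assume "par t a" "par t b"
  then have "par a (complete_dev t)" "par b (complete_dev t)"
    by (auto intro: par_complete_dev)
  then show "\<exists>u. par\<^sup>*\<^sup>* a u \<and> par\<^sup>=\<^sup>= b u"
    by blast
qed

lemma confluentp_guarded_step: "confluentp guarded_step"
  using strong_confluentp_imp_confluentp[OF strong_confluentp_par]
  unfolding confluentp_def rtranclp_conversep rtranclp_par_eq .

lemma conv_imp_guarded_joinable:
  assumes "conv s t"
  obtains u where "guarded_step\<^sup>*\<^sup>* s u" and "guarded_step\<^sup>*\<^sup>* t u"
proof -
  have "equivclp guarded_step s t"
    using assms unfolding conv_eq_equivclp
    by (rule equivclp_map[where f = id, simplified]) (rule step_imp_guarded_step)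
  then have "(guarded_step\<^sup>*\<^sup>* OO (guarded_step\<^sup>*\<^sup>*)\<inverse>\<inverse>) s t"
    unfolding semiconfluentp_equivclp[OF confluentp_imp_semiconfluentp[OF confluentp_guarded_step]]
      rtranclp_conversep .
  then show ?thesis
    using that by blast
qed

section \<open>Normal forms\<close>

lemma normal_form_appD: "normal_form (s \<cdot> t) \<Longrightarrow> normal_form s \<and> normal_form t"
  unfolding normal_form_def by (blast intro: step.appL step.appR)

lemma root_step_not_normal_form: "root_step s t \<Longrightarrow> \<not> normal_form s"
  unfolding normal_form_def by (blast intro: step.root)

lemma guarded_root_imp_root_step_or_conv:
  "guarded_root s t \<Longrightarrow> (\<exists>t'. root_step s t') \<or> (\<exists>z x y. s = CC \<cdot> z \<cdot> x \<cdot> y \<and> x \<noteq> y \<and> conv x y)"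
  by (induction rule: guarded_root.induct) (auto intro: root_step.intros)

lemma guarded_step_from_normal_form:
  fixes t :: "'v trm"
  shows "guarded_step t u \<Longrightarrow> normal_form t \<Longrightarrow>
    \<exists>z x y :: 'v trm. size (CC \<cdot> z \<cdot> x \<cdot> y) \<le> size t \<and> normal_form x \<and> normal_form y \<and> conv x y \<and> x \<noteq> y"
proof (induction rule: guarded_step.induct)
  case (root s t)
  then obtain z x y where s: "s = CC \<cdot> z \<cdot> x \<cdot> y" and "x \<noteq> y" "conv x y"
    using guarded_root_imp_root_step_or_conv root_step_not_normal_form by blast
  moreover have "normal_form x" "normal_form y"
    using root.prems normal_form_appD unfolding s by blast+
  ultimately show ?case
    unfolding s by (blast intro: order_refl)
next
  case (appL s t u)
  then obtain z x y :: "'v trm" where "size (CC \<cdot> z \<cdot> x \<cdot> y) \<le> size s"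
    "normal_form x" "normal_form y" "conv x y" "x \<noteq> y"
    using normal_form_appD by blast
  then show ?case
    by (intro exI[of _ z] exI[of _ x] exI[of _ y]) simp
next
  case (appR s t u)
  then obtain z x y :: "'v trm" where "size (CC \<cdot> z \<cdot> x \<cdot> y) \<le> size s"
    "normal_form x" "normal_form y" "conv x y" "x \<noteq> y"
    using normal_form_appD by blast
  then show ?case
    by (intro exI[of _ z] exI[of _ x] exI[of _ y]) simp
qed

lemma normal_forms_unique:
  fixes t1 t2 :: "'v trm"
  shows "normal_form t1 \<Longrightarrow> normal_form t2 \<Longrightarrow> conv t1 t2 \<Longrightarrow> t1 = t2"
proof (induction "size t1 + size t2" arbitrary: t1 t2 rule: less_induct)
  case less
  have "\<not> guarded_step t u" if "t = t1 \<or> t = t2" for t u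
  proof
    assume "guarded_step t u"
    moreover have "normal_form t"
      using that less.prems by blast
    ultimately obtain z x y :: "'v trm" where "size (CC \<cdot> z \<cdot> x \<cdot> y) \<le> size t"
      "normal_form x" "normal_form y" "conv x y" "x \<noteq> y"
      using guarded_step_from_normal_form by blast
    moreover have "size x + size y < size t1 + size t2"
      using calculation(1) that by auto
    ultimately show False
      using less.hyps by blast
  qed
  moreover obtain u where "guarded_step\<^sup>*\<^sup>* t1 u" "guarded_step\<^sup>*\<^sup>* t2 u"
    using conv_imp_guarded_joinable less.prems(3) by blast
  ultimately show "t1 = t2"
    by (metis converse_rtranclpE)
qed

theorem mainTheorem7:
  fixes t1 t2 :: "nat trm"
  assumes "normal_form t1" and "normal_form t2" and "conv t1 t2"
  shows "t1 = t2"
  using assms by (rule normal_forms_unique)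

end
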